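(* Let $X\subseteq\mathbb{C}^n$ be a complex analytic set, $x\in X$, $\mathcal M\subseteq\mathcal O_{X,x}^p$ a submodule with matrix of generators $[\mathcal M]$, and $k\in\mathbb N$. Then for all $t_1,\dots,t_k\in\{1,\dots,n\}$ and all $k$-indexes $I,J,K,L$, $$(z_{t_1}-z'_{t_1})\cdots(z_{t_k}-z'_{t_k})\,\det(\mathcal M_{IJ})\,\det(\mathcal M'_{KL})\in J_{2k}(\mathcal M_D)\quad\text{at }(x,x).$$
   Context: $z_1,\dots,z_n$ are coordinates on $\mathbb C^n$. $\pi_1,\pi_2:X\times X\to X$ are the projections; for an object $A$ on $X$ we write $A$ for $A\circ\pi_1$ and $A'$ for $A\circ\pi_2$ (so $z_i'=z_i\circ\pi_2$). $\mathcal M_{IJ}$ is the $k\times k$ submatrix of $[\mathcal M]$ with rows $I$ and columns $J$ ($k$-indexes are strictly increasing tuples). For $h\in\mathcal O_X^p$, $h_D=(h\circ\pi_1,h\circ\pi_2)$; $\mathcal M_D$ is the submodule of $\mathcal O^{2p}_{X\times X}$ generated by $\{h_D:h\in\mathcal M\}$; if $\mathcal M$ is generated by $g_1,\dots,g_r$, $\mathcal M_D$ is generated by the $(g_j)_D$ together with $(0,(z_i-z_i')g_j')$, $i=1..n$, $j=1..r$. $J_{m}(N)$ is the ideal generated by the $m\times m$ minors of a matrix of generators of $N$. *)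

theory Defs
  imports "HOL-Analysis.Analysis"
begin

definition holo_on :: "(complex^'n) set \<Rightarrow> (complex^'n \<Rightarrow> complex) \<Rightarrow> bool" where
  "holo_on U f \<longleftrightarrow> open U \<and>
     (\<forall>z\<in>U. \<exists>L. (f has_derivative L) (at z) \<and> (\<forall>c v. L (c *s v) = c * L v))"

definition holo2_on :: "((complex^'n) \<times> (complex^'n)) set \<Rightarrow> ((complex^'n) \<times> (complex^'n) \<Rightarrow> complex) \<Rightarrow> bool" where
  "holo2_on V f \<longleftrightarrow> open V \<and>
     (\<forall>zw\<in>V. \<exists>L. (f has_derivative L) (at zw) \<and>
        (\<forall>c v w. L (c *s v, c *s w) = c * L (v, w)))"

definition analytic_set :: "(complex^'n) set \<Rightarrow> bool" where
  "analytic_set X \<longleftrightarrow> (\<forall>a\<in>X. \<exists>U F. open U \<and> a \<in> U \<and> finite F \<and>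
      (\<forall>f\<in>F. holo_on U f) \<and> X \<inter> U = {z\<in>U. \<forall>f\<in>F. f z = 0})"

definition ldet :: "nat \<Rightarrow> (nat \<Rightarrow> nat \<Rightarrow> 'a::comm_ring_1) \<Rightarrow> 'a" where
  "ldet m A = (\<Sum>\<sigma> | \<sigma> permutes {..<m}. of_int (sign \<sigma>) * (\<Prod>i<m. A i (\<sigma> i)))"

definition kindex :: "nat \<Rightarrow> nat \<Rightarrow> nat list \<Rightarrow> bool" where
  "kindex k N I \<longleftrightarrow> length I = k \<and> sorted_wrt (<) I \<and> set I \<subseteq> {..<N}"

text \<open>The matrix of generators [M]: g j i is the i-th component (i < p) of the
  j-th generator (j < r), given by a holomorphic representative near x.
  minorM g I J z = det (M_IJ) evaluated at z.\<close>

definition minorM :: "(nat \<Rightarrow> nat \<Rightarrow> complex^'n \<Rightarrow> complex) \<Rightarrow> nat list \<Rightarrow> nat list \<Rightarrow> complex^'n \<Rightarrow> complex" where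
  "minorM g I J z = ldet (length I) (\<lambda>a b. g (J ! b) (I ! a) z)"

text \<open>Matrix of generators of M_D (2p rows): columns Inl j are (g_j)_D, columns
  Inr (t,j) are (0, (z_t - z'_t) g_j').\<close>

definition MD_entry :: "nat \<Rightarrow> (nat \<Rightarrow> nat \<Rightarrow> complex^'n \<Rightarrow> complex) \<Rightarrow> nat \<Rightarrow> nat + ('n \<times> nat)
    \<Rightarrow> (complex^'n) \<times> (complex^'n) \<Rightarrow> complex" where
  "MD_entry p g i c zw = (case zw of (z, w) \<Rightarrow>
     (case c of Inl j \<Rightarrow> (if i < p then g j i z else g j (i - p) w)
              | Inr (t, j) \<Rightarrow> (if i < p then 0 else (z $ t - w $ t) * g j (i - p) w)))"

definition MD_cols :: "nat \<Rightarrow> (nat + ('n \<times> nat)) set" where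
  "MD_cols r = {Inl j | j. j < r} \<union> {Inr (t, j) | t j. j < r}"

definition minorD :: "nat \<Rightarrow> (nat \<Rightarrow> nat \<Rightarrow> complex^'n \<Rightarrow> complex) \<Rightarrow> nat list
    \<Rightarrow> (nat + ('n \<times> nat)) list \<Rightarrow> (complex^'n) \<times> (complex^'n) \<Rightarrow> complex" where
  "minorD p g R C zw = ldet (length R) (\<lambda>a b. MD_entry p g (R ! a) (C ! b) zw)"

definition valid_MD_minor :: "nat \<Rightarrow> nat \<Rightarrow> nat \<Rightarrow> nat list \<times> (nat + ('n \<times> nat)) list \<Rightarrow> bool" where
  "valid_MD_minor m p r s \<longleftrightarrow> length (fst s) = m \<and> length (snd s) = m \<and>
     distinct (fst s) \<and> distinct (snd s) \<and> set (fst s) \<subseteq> {..<2*p} \<and> set (snd s) \<subseteq> MD_cols r"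

definition in_J_MD :: "nat \<Rightarrow> nat \<Rightarrow> nat \<Rightarrow> (nat \<Rightarrow> nat \<Rightarrow> complex^'n \<Rightarrow> complex)
    \<Rightarrow> (complex^'n) set \<Rightarrow> complex^'n \<Rightarrow> ((complex^'n) \<times> (complex^'n) \<Rightarrow> complex) \<Rightarrow> bool" where
  "in_J_MD m p r g X x f \<longleftrightarrow> (\<exists>V S a. open V \<and> (x, x) \<in> V \<and> finite S \<and>
     (\<forall>s\<in>S. valid_MD_minor m p r s \<and> holo2_on V (a s)) \<and>
     (\<forall>zw \<in> V \<inter> (X \<times> X). f zw = (\<Sum>s\<in>S. a s zw * minorD p g (fst s) (snd s) zw)))"

end

theory Submission
  imports Defs "Jordan_Normal_Form.Determinant"
begin

text \<open>The product is itself a single \<open>2k \<times> 2k\<close> minor of \<open>[\<M>\<^sub>D]\<close>: take the rows \<open>I\<close> and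
  \<open>p + K\<close>, and the columns \<open>(g\<^sub>j)\<^sub>D\<close> for \<open>j \<in> J\<close> together with the columns
  \<open>(0, (z\<^sub>t - z'\<^sub>t) g'\<^sub>l)\<close> for the pairs \<open>(t\<^sub>i, L\<^sub>i)\<close>. This submatrix is block lower triangular
  with diagonal blocks \<open>\<M>\<^sub>I\<^sub>J\<close> and \<open>\<M>'\<^sub>K\<^sub>L\<close>, the \<open>i\<close>-th column of the latter scaled by
  \<open>z\<^sub>t\<^sub>i - z'\<^sub>t\<^sub>i\<close>. So the identity holds with coefficient 1 on all of \<open>\<complex>\<^sup>n \<times> \<complex>\<^sup>n\<close>, and
  neither the analyticity of \<open>X\<close> nor the holomorphy of the generators is needed.\<close>

lemma ldet_eq_det: "ldet m A = det (mat m m (\<lambda>(i, j). A i j))"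
proof -
  have "det (mat m m (\<lambda>(i, j). A i j)) = (\<Sum>\<sigma> | \<sigma> permutes {0..<m}.
      of_int (sign \<sigma>) * (\<Prod>i = 0..<m. mat m m (\<lambda>(i, j). A i j) $$ (i, \<sigma> i)))"
    by (rule det_def') simp
  also have "\<dots> = ldet m A"
    unfolding ldet_def atLeast0LessThan
  proof (intro sum.cong refl arg_cong2[where f = "(*)"] prod.cong)
    fix \<sigma> i assume "\<sigma> \<in> {\<sigma>. \<sigma> permutes {..<m}}" "i \<in> {..<m}"
    then show "mat m m (\<lambda>(i, j). A i j) $$ (i, \<sigma> i) = A i (\<sigma> i)"
      using permutes_in_image by fastforce
  qed
  finally show ?thesis by simp
qed

lemma ldet_cong:
  assumes "\<And>a b. a < m \<Longrightarrow> b < m \<Longrightarrow> A a b = B a b"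
  shows "ldet m A = ldet m B"
  unfolding ldet_def
proof (intro sum.cong refl arg_cong2[where f = "(*)"] prod.cong)
  fix \<sigma> i assume "\<sigma> \<in> {\<sigma>. \<sigma> permutes {..<m}}" "i \<in> {..<m}"
  then show "A i (\<sigma> i) = B i (\<sigma> i)"
    using assms permutes_in_image by fastforce
qed

lemma ldet_mult_cols: "ldet m (\<lambda>a b. c b * A a b) = prod c {..<m} * ldet m A"
  unfolding ldet_def sum_distrib_left
proof (rule sum.cong[OF refl])
  fix \<sigma> assume "\<sigma> \<in> {\<sigma>. \<sigma> permutes {..<m}}"
  then have "(\<Prod>i<m. c (\<sigma> i)) = prod c {..<m}"
    using prod.reindex_bij_betw[OF permutes_imp_bij, of \<sigma> "{..<m}" c] by simp
  then show "of_int (sign \<sigma>) * (\<Prod>i<m. c (\<sigma> i) * A i (\<sigma> i)) =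
      prod c {..<m} * (of_int (sign \<sigma>) * (\<Prod>i<m. A i (\<sigma> i)))"
    by (simp add: prod.distrib)
qed

lemma ldet_block_upper_right_zero:
  fixes A :: "nat \<Rightarrow> nat \<Rightarrow> 'a::idom"
  assumes "\<And>a b. a < k \<Longrightarrow> k \<le> b \<Longrightarrow> b < k + m \<Longrightarrow> A a b = 0"
  shows "ldet (k + m) A = ldet k A * ldet m (\<lambda>a b. A (a + k) (b + k))"
proof -
  let ?A1 = "mat k k (\<lambda>(i, j). A i j)"
  let ?A3 = "mat m k (\<lambda>(i, j). A (i + k) j)"
  let ?A4 = "mat m m (\<lambda>(i, j). A (i + k) (j + k))"
  have "mat (k + m) (k + m) (\<lambda>(i, j). A i j) = four_block_mat ?A1 (0\<^sub>m k m) ?A3 ?A4"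
    by (rule eq_matI) (auto simp: assms)
  then have "ldet (k + m) A = det (four_block_mat ?A1 (0\<^sub>m k m) ?A3 ?A4)"
    by (simp add: ldet_eq_det)
  also have "\<dots> = det ?A1 * det ?A4"
    by (rule det_four_block_mat_upper_right_zero) auto
  finally show ?thesis by (simp add: ldet_eq_det)
qed

lemma minorD_block_diagonal:
  assumes "length I = k" "length J = k" "length K = k" "length L = k" "length ts = k"
    and "set I \<subseteq> {..<p}" "set K \<subseteq> {..<p}"
  shows "minorD p g (I @ map (\<lambda>i. i + p) K) (map Inl J @ map Inr (zip ts L)) (z, w) =
    prod_list (map (\<lambda>t. z $ t - w $ t) ts) * minorM g I J z * minorM g K L w"
proof -
  let ?R = "I @ map (\<lambda>i. i + p) K" and ?C = "map Inl J @ map Inr (zip ts L)"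
  let ?E = "\<lambda>a b. MD_entry p g (?R ! a) (?C ! b) (z, w)"
  have I_p: "I ! a < p" if "a < k" for a
    using assms(1,6) nth_mem that by blast
  have K_p: "K ! a < p" if "a < k" for a
    using assms(3,7) nth_mem that by blast
  have "minorD p g ?R ?C (z, w) = ldet (k + k) ?E"
    using assms(1,3) by (simp add: minorD_def)
  also have "\<dots> = ldet k ?E * ldet k (\<lambda>a b. ?E (a + k) (b + k))"
    by (rule ldet_block_upper_right_zero)
      (use assms I_p in \<open>auto simp: MD_entry_def nth_append\<close>)
  also have "ldet k ?E = minorM g I J z"
    unfolding minorM_def assms(1)
    by (rule ldet_cong) (use assms I_p in \<open>simp add: MD_entry_def nth_append\<close>)
  also have "ldet k (\<lambda>a b. ?E (a + k) (b + k)) =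
      ldet k (\<lambda>a b. (z $ (ts ! b) - w $ (ts ! b)) * g (L ! b) (K ! a) w)"
    by (rule ldet_cong) (use assms K_p in \<open>simp add: MD_entry_def nth_append\<close>)
  also have "\<dots> = (\<Prod>b<k. z $ (ts ! b) - w $ (ts ! b)) * minorM g K L w"
    unfolding ldet_mult_cols minorM_def assms(3) ..
  also have "(\<Prod>b<k. z $ (ts ! b) - w $ (ts ! b)) = prod_list (map (\<lambda>t. z $ t - w $ t) ts)"
    using assms(5) by (simp add: prod.list_conv_set_nth atLeast0LessThan)
  finally show ?thesis by (simp add: mult_ac)
qed

lemma valid_MD_minor_block_diagonal:
  assumes "length ts = k" "kindex k p I" "kindex k r J" "kindex k p K" "kindex k r L"
  shows "valid_MD_minor (2 * k) p r (I @ map (\<lambda>i. i + p) K, map Inl J @ map Inr (zip ts L))"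
proof -
  from assms(2-5) have "distinct I" "distinct J" "distinct K" "distinct L"
    by (auto simp: kindex_def strict_sorted_iff)
  then show ?thesis
    using assms by (auto simp: valid_MD_minor_def kindex_def MD_cols_def distinct_map
        inj_on_def distinct_zipI2 dest!: set_zip_rightD)
qed

lemma in_J_MD_minorD:
  assumes "valid_MD_minor m p r (R, C)"
  shows "in_J_MD m p r g X x (minorD p g R C)"
proof -
  have "holo2_on UNIV (\<lambda>_. 1)"
    unfolding holo2_on_def by (auto intro!: exI[of _ "\<lambda>_. 0"])
  then show ?thesis
    unfolding in_J_MD_def using assms
    by (intro exI[of _ UNIV] exI[of _ "{(R, C)}"] exI[of _ "\<lambda>_ _. 1"]) auto
qed

theorem mainTheorem10:
  fixes X :: "(complex^'n) set" and x :: "complex^'n" and U :: "(complex^'n) set"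
    and p r k :: nat and g :: "nat \<Rightarrow> nat \<Rightarrow> complex^'n \<Rightarrow> complex"
    and ts :: "'n list" and I J K L :: "nat list"
  assumes "analytic_set X" and "x \<in> X"
    and "x \<in> U" and "\<forall>j<r. \<forall>i<p. holo_on U (g j i)"
    and "length ts = k"
    and "kindex k p I" and "kindex k r J" and "kindex k p K" and "kindex k r L"
  shows "in_J_MD (2*k) p r g X x
           (\<lambda>(z, w). prod_list (map (\<lambda>t. z $ t - w $ t) ts) * minorM g I J z * minorM g K L w)"
proof -
  let ?R = "I @ map (\<lambda>i. i + p) K" and ?C = "map Inl J @ map Inr (zip ts L)"
  have "(\<lambda>(z, w). prod_list (map (\<lambda>t. z $ t - w $ t) ts) * minorM g I J z * minorM g K L w) =
      minorD p g ?R ?C"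
    using assms(5-9) by (auto simp: kindex_def minorD_block_diagonal)
  moreover have "in_J_MD (2 * k) p r g X x (minorD p g ?R ?C)"
    using valid_MD_minor_block_diagonal[OF assms(5-9)] by (rule in_J_MD_minorD)
  ultimately show ?thesis by simp
qed

end
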